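(* Let $\rho_\chi(p,\pi/8)=p|\Psi_s\rangle\langle\Psi_s|+(1-p)\,|00\rangle\langle00|\otimes\tfrac{I_2}{2}$ with $|\Psi_s\rangle=\cos\frac{\pi}{8}|000\rangle+\sin\frac{\pi}{8}|111\rangle$. For diagonal filters $F_A=\mathrm{diag}(x,1)$, $F_B=\mathrm{diag}(y,1)$, $F_C=\mathrm{diag}(z,1)$ with $x,y,z>0$, let $\rho'=\frac1N(F_A\otimes F_B\otimes F_C)\rho_\chi(p,\pi/8)(F_A\otimes F_B\otimes F_C)^\dagger$, where $$N=\tfrac{2-\sqrt2}{4}p+\tfrac{1-p}{2}x^2y^2+\tfrac{2+\sqrt2 p}{4}x^2y^2z^2 .$$ Then the $3\times 9$ matrix $M'_{j,ik}=\mathrm{tr}[\rho'(\sigma_i\otimes\sigma_j\otimes\sigma_k)]$ has singular values $\frac{pxyz}{N},\frac{pxyz}{N},\frac{|D|}{N}$ with $D=-\tfrac{2-\sqrt2}{4}p-\tfrac{1-p}{2}x^2y^2+\tfrac{2+\sqrt2p}{4}x^2y^2z^2$; whenever $pxyz>|D|$, the maximum of $|\mathrm{tr}(\mathcal{S}\rho')|$ over Svetlichny operators equals $4pxyz/N$. Moreover, for every $p\in[0.3697,1]$ there exist $x,y,z>0$ such that $\rho'$ violates the Svetlichny inequality, i.e. $\max_{\mathcal{S}}|\mathrm{tr}(\mathcal{S}\rho')|>4$.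
   Context: $\sigma_1,\sigma_2,\sigma_3$ are the Pauli matrices, $I_2$ the $2\times2$ identity. For real unit vectors $\vec a,\vec a',\vec b,\vec b',\vec c,\vec c'\in\mathbb{R}^3$ let $A=\vec a\cdot\vec\sigma=\sum_k a_k\sigma_k$, and similarly $A',B,B',C,C'$. The Svetlichny operator is $$\mathcal{S}=A\otimes[(B+B')\otimes C+(B-B')\otimes C']+A'\otimes[(B-B')\otimes C-(B+B')\otimes C'],$$ and maxima are over all choices of the six unit vectors. A state violates the Svetlichny inequality if $|\mathrm{tr}(\mathcal{S}\rho)|>4$ for some such choice. *)

theory Defs
  imports "HOL-Analysis.Analysis" "HOL-Library.Multiset"
begin

text \<open>Qubit operators are complex 2x2 matrices indexed by type 2; basis state |0> is index 0,
  |1> is index 1. Multi-qubit operators are indexed by product types (Kronecker product).\<close>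

type_synonym qop = "complex^2^2"
type_synonym op3 = "complex^(2 \<times> 2 \<times> 2)^(2 \<times> 2 \<times> 2)"

definition kron :: "complex^'a^'a \<Rightarrow> complex^'b^'b \<Rightarrow> complex^('a \<times> 'b)^('a \<times> 'b)" where
  "kron A B = (\<chi> r c. A$(fst r)$(fst c) * B$(snd r)$(snd c))"

definition mtrace :: "complex^'n^'n \<Rightarrow> complex" where
  "mtrace M = (\<Sum>i\<in>UNIV. M$i$i)"

definition adjoint :: "complex^'n^'n \<Rightarrow> complex^'n^'n" where
  "adjoint M = (\<chi> i j. cnj (M$j$i))"

definition outer :: "complex^'n \<Rightarrow> complex^'n^'n" where
  "outer v = (\<chi> i j. v$i * cnj (v$j))"

definition pauli1 :: qop where
  "pauli1 = (\<chi> i j. if i \<noteq> j then 1 else 0)"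
definition pauli2 :: qop where
  "pauli2 = (\<chi> i j. if i = 0 \<and> j = 1 then - \<i> else if i = 1 \<and> j = 0 then \<i> else 0)"
definition pauli3 :: qop where
  "pauli3 = (\<chi> i j. if i = j then (if i = 0 then 1 else -1) else 0)"

text \<open>sigma indexed by type 3 with elements 1, 2, 3 (= 0).\<close>
definition sigma :: "3 \<Rightarrow> qop" where
  "sigma k = (if k = 1 then pauli1 else if k = 2 then pauli2 else pauli3)"

definition dot_sigma :: "real^3 \<Rightarrow> qop" where
  "dot_sigma a = (\<Sum>k\<in>UNIV. a$k *\<^sub>R sigma k)"

definition svetlichny_op ::
  "real^3 \<Rightarrow> real^3 \<Rightarrow> real^3 \<Rightarrow> real^3 \<Rightarrow> real^3 \<Rightarrow> real^3 \<Rightarrow> op3" where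
  "svetlichny_op a a' b b' c c' =
     (let A = dot_sigma a; A' = dot_sigma a'; B = dot_sigma b; B' = dot_sigma b';
          C = dot_sigma c; C' = dot_sigma c'
      in kron A (kron (B + B') C + kron (B - B') C')
       + kron A' (kron (B - B') C - kron (B + B') C'))"

definition svet_values :: "op3 \<Rightarrow> real set" where
  "svet_values \<rho> = {cmod (mtrace (svetlichny_op a a' b b' c c' ** \<rho>)) | a a' b b' c c'.
       norm a = 1 \<and> norm a' = 1 \<and> norm b = 1 \<and> norm b' = 1 \<and> norm c = 1 \<and> norm c' = 1}"

definition violates_svetlichny :: "op3 \<Rightarrow> bool" where
  "violates_svetlichny \<rho> \<longleftrightarrow> (\<exists>v\<in>svet_values \<rho>. v > 4)"

definition ket0 :: "complex^2" where "ket0 = (\<chi> i. if i = 0 then 1 else 0)"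

definition psi_s :: "complex^(2 \<times> 2 \<times> 2)" where
  "psi_s = (\<chi> i. if i = (0,0,0) then complex_of_real (cos (pi/8))
                 else if i = (1,1,1) then complex_of_real (sin (pi/8)) else 0)"

definition rho_chi :: "real \<Rightarrow> op3" where
  "rho_chi p = p *\<^sub>R outer psi_s
      + (1 - p) *\<^sub>R kron (outer ket0) (kron (outer ket0) ((1/2) *\<^sub>R mat 1))"

definition filt :: "real \<Rightarrow> qop" where
  "filt x = (\<chi> i j. if i = j then (if i = 0 then complex_of_real x else 1) else 0)"

definition normN :: "real \<Rightarrow> real \<Rightarrow> real \<Rightarrow> real \<Rightarrow> real" where
  "normN p x y z = (2 - sqrt 2)/4 * p + (1 - p)/2 * x^2 * y^2 + (2 + sqrt 2 * p)/4 * x^2 * y^2 * z^2"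

definition Dval :: "real \<Rightarrow> real \<Rightarrow> real \<Rightarrow> real \<Rightarrow> real" where
  "Dval p x y z = - (2 - sqrt 2)/4 * p - (1 - p)/2 * x^2 * y^2 + (2 + sqrt 2 * p)/4 * x^2 * y^2 * z^2"

definition rho_filtered :: "real \<Rightarrow> real \<Rightarrow> real \<Rightarrow> real \<Rightarrow> op3" where
  "rho_filtered p x y z =
     (let F = kron (filt x) (kron (filt y) (filt z))
      in (1 / normN p x y z) *\<^sub>R (F ** rho_chi p ** adjoint F))"

text \<open>Correlation matrix M_{j,ik} = tr[rho (sigma_i (x) sigma_j (x) sigma_k)], row j, column (i,k).
  (The trace is real for Hermitian rho; we take its real part.)\<close>
definition corr_matrix :: "op3 \<Rightarrow> real^(3 \<times> 3)^3" where
  "corr_matrix \<rho> = (\<chi> j c. Re (mtrace (\<rho> ** kron (sigma (fst c)) (kron (sigma j) (sigma (snd c))))))"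

text \<open>S is the multiset of singular values of the m x n matrix M (m \<le> n): the nonnegative square
  roots of the eigenvalues (with multiplicity) of M M^T, i.e. of the roots of its characteristic polynomial.\<close>
definition has_singular_values :: "real^'n^'m \<Rightarrow> real multiset \<Rightarrow> bool" where
  "has_singular_values M S \<longleftrightarrow> size S = CARD('m) \<and> (\<forall>s\<in>#S. s \<ge> 0) \<and>
     (\<forall>t. det (t *\<^sub>R (mat 1 :: real^'m^'m) - M ** transpose M) = (\<Prod>s\<in>#S. t - s^2))"

end

theory Submission
  imports Defs
begin

text \<open>The filtered state has support only on the basis states 000, 001 and 111, with the 111-000
  coherence as its only off-diagonal entry, so its three-qubit correlations are those of a
  GHZ-type state: a product observable with Bloch vectors a, b, c has expectation
  d a3 b3 c3 + \<alpha> (a1 b1 c1 - a1 b2 c2 - a2 b1 c2 - a2 b2 c1)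
  with d = D/N and \<alpha> = pxyz/(\<surd>2 N). The correlation matrix then has Gram matrix
  diag(2\<alpha>^2, 2\<alpha>^2, d^2), and Cauchy-Schwarz bounds every Svetlichny value by 4 max(\<surd>2|\<alpha>|, |d|),
  a bound attained by coplanar measurement directions when \<surd>2\<alpha> dominates.
  Finally, for y = 1 the normalisation N is a quadratic in x, and minimising it against the
  linear term pxz shows that N < pxyz can be reached as soon as
  (2 - \<surd>2)(2 + \<surd>2 p) < 4p, i.e. for p above roughly 0.3695.\<close>

lemma kron_add_right: "kron A (P + Q) = kron A P + kron A Q"
  by (simp add: kron_def vec_eq_iff algebra_simps)

lemma kron_diff_right: "kron A (P - Q) = kron A P - kron A Q"
  by (simp add: kron_def vec_eq_iff algebra_simps)

lemma mtrace_mult_add_left: "mtrace ((P + Q) ** R) = mtrace (P ** R) + mtrace (Q ** R)"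
  by (simp add: mtrace_def matrix_matrix_mult_def distrib_right sum.distrib)

lemma mtrace_mult_diff_left: "mtrace ((P - Q) ** R) = mtrace (P ** R) - mtrace (Q ** R)"
  by (simp add: mtrace_def matrix_matrix_mult_def left_diff_distrib sum_subtractf)

lemma mtrace_mult_commute: "mtrace (A ** B) = mtrace (B ** A)"
  using trace_mul_sym[of A B] by (simp add: mtrace_def trace_def)

lemma dot_sigma_add: "dot_sigma (a + b) = dot_sigma a + dot_sigma b"
  unfolding dot_sigma_def by (simp add: scaleR_add_left sum.distrib)

lemma dot_sigma_diff: "dot_sigma (a - b) = dot_sigma a - dot_sigma b"
  unfolding dot_sigma_def by (simp add: scaleR_diff_left sum_subtractf)

lemma dot_sigma_entries:
  "dot_sigma a $ 0 $ 0 = complex_of_real (a$3)"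
  "dot_sigma a $ 0 $ 1 = complex_of_real (a$1) - \<i> * complex_of_real (a$2)"
  "dot_sigma a $ 1 $ 0 = complex_of_real (a$1) + \<i> * complex_of_real (a$2)"
  "dot_sigma a $ 1 $ 1 = - complex_of_real (a$3)"
  unfolding dot_sigma_def sum_3 vector_add_component vector_scaleR_component
  by (simp_all add: sigma_def pauli1_def pauli2_def pauli3_def scaleR_conv_of_real)

lemma sigma_eq_dot_sigma_axis: "sigma k = dot_sigma (axis k 1)"
  unfolding dot_sigma_def axis_def by (simp add: if_distrib[of "\<lambda>u. u *\<^sub>R _"] cong: if_cong)

lemma diagonal_sandwich_entry:
  fixes F R :: "complex^'n^'n"
  assumes F: "\<And>r t. F $ r $ t = (if r = t then complex_of_real (f r) else 0)"
  shows "(F ** R ** adjoint F) $ r $ s = complex_of_real (f r) * R $ r $ s * complex_of_real (f s)"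
proof -
  have FR: "(F ** R) $ r $ u = complex_of_real (f r) * R $ r $ u" for u
    unfolding matrix_matrix_mult_def by (simp add: F if_distrib[of "\<lambda>v. v * _"] cong: if_cong)
  show ?thesis
    unfolding matrix_matrix_mult_def[of "F ** R"]
    by (simp add: FR adjoint_def F if_distrib[of cnj] if_distrib[of "\<lambda>v. _ * v"] cong: if_cong)
qed

lemma bit_cases: "(u::2) = 0 \<or> u = 1"
proof -
  have "(UNIV :: 2 set) = {0, 1}"
    using exhaust_2 by (metis UNIV_2 insert_commute num1_eq_iff zero_neq_one)
  then show ?thesis by auto
qed

definition filter_weight :: "real \<Rightarrow> real \<Rightarrow> real \<Rightarrow> 2 \<times> 2 \<times> 2 \<Rightarrow> real" where
  "filter_weight x y z r =
     (if fst r = 0 then x else 1) * (if fst (snd r) = 0 then y else 1) * (if snd (snd r) = 0 then z else 1)"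

lemma kron_filt_entry:
  "kron (filt x) (kron (filt y) (filt z)) $ r $ t = (if r = t then complex_of_real (filter_weight x y z r) else 0)"
  by (cases r; cases t) (auto simp: kron_def filt_def filter_weight_def)

definition ghz_amp :: "2 \<times> 2 \<times> 2 \<Rightarrow> real" where
  "ghz_amp r = (if r = (0,0,0) then cos (pi/8) else if r = (1,1,1) then sin (pi/8) else 0)"

lemma rho_chi_entry:
  "rho_chi p $ r $ s = complex_of_real (p * ghz_amp r * ghz_amp s
     + (1 - p) * (if (r = (0,0,0) \<and> s = (0,0,0)) \<or> (r = (0,0,1) \<and> s = (0,0,1)) then 1/2 else 0))"
proof -
  have support: "(fst r = 0 \<and> fst s = 0 \<and> fst (snd r) = 0 \<and> fst (snd s) = 0 \<and> snd (snd r) = snd (snd s))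
      \<longleftrightarrow> (r = (0,0,0) \<and> s = (0,0,0)) \<or> (r = (0,0,1) \<and> s = (0,0,1))"
    using bit_cases[of "snd (snd r)"] by (cases r; cases s) auto
  show ?thesis
    unfolding support[symmetric] rho_chi_def vector_add_component vector_scaleR_component
    by (simp add: kron_def vector_scaleR_component mat_def)
      (simp add: outer_def ket0_def psi_s_def ghz_amp_def scaleR_conv_of_real)
qed

definition ghz_sparse :: "real \<Rightarrow> real \<Rightarrow> real \<Rightarrow> real \<Rightarrow> op3" where
  "ghz_sparse w0 w1 w7 wc = (\<chi> r s.
       (if r = (0,0,0) \<and> s = (0,0,0) then complex_of_real w0 else 0)
     + (if r = (0,0,1) \<and> s = (0,0,1) then complex_of_real w1 else 0)
     + (if r = (1,1,1) \<and> s = (1,1,1) then complex_of_real w7 else 0)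
     + (if r = (1,1,1) \<and> s = (0,0,0) then complex_of_real wc else 0)
     + (if r = (0,0,0) \<and> s = (1,1,1) then complex_of_real wc else 0))"

lemma rho_filtered_eq_ghz_sparse:
  "rho_filtered p x y z = ghz_sparse
     ((p * cos (pi/8)^2 + (1-p)/2) * x^2*y^2*z^2 / normN p x y z)
     ((1-p)/2 * x^2*y^2 / normN p x y z)
     (p * sin (pi/8)^2 / normN p x y z)
     (p * cos (pi/8) * sin (pi/8) * x*y*z / normN p x y z)" (is "_ = ?G")
proof -
  let ?w0 = "(p * cos (pi/8)^2 + (1-p)/2) * x^2*y^2*z^2 / normN p x y z"
  let ?w1 = "(1-p)/2 * x^2*y^2 / normN p x y z"
  let ?w7 = "p * sin (pi/8)^2 / normN p x y z"
  let ?wc = "p * cos (pi/8) * sin (pi/8) * x*y*z / normN p x y z"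
  have cases: "r = (0,0,0) \<or> r = (0,0,1) \<or> r = (1,1,1) \<or> (r \<noteq> (0,0,0) \<and> r \<noteq> (0,0,1) \<and> r \<noteq> (1,1,1))"
    for r :: "2\<times>2\<times>2" by blast
  have weights: "filter_weight x y z r * (p * ghz_amp r * ghz_amp s
         + (1 - p) * (if (r = (0,0,0) \<and> s = (0,0,0)) \<or> (r = (0,0,1) \<and> s = (0,0,1)) then 1/2 else 0))
       * filter_weight x y z s / normN p x y z
     = (if r = (0,0,0) \<and> s = (0,0,0) then ?w0 else 0) + (if r = (0,0,1) \<and> s = (0,0,1) then ?w1 else 0)
     + (if r = (1,1,1) \<and> s = (1,1,1) then ?w7 else 0) + (if r = (1,1,1) \<and> s = (0,0,0) then ?wc else 0)
     + (if r = (0,0,0) \<and> s = (1,1,1) then ?wc else 0)" for r s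
    using cases[of r] cases[of s]
    by (elim disjE conjE; simp add: ghz_amp_def filter_weight_def power2_eq_square; simp add: field_simps)
  have entry: "rho_filtered p x y z $ r $ s = complex_of_real
      (filter_weight x y z r * (p * ghz_amp r * ghz_amp s
         + (1 - p) * (if (r = (0,0,0) \<and> s = (0,0,0)) \<or> (r = (0,0,1) \<and> s = (0,0,1)) then 1/2 else 0))
       * filter_weight x y z s / normN p x y z)" for r s
    unfolding rho_filtered_def Let_def vector_scaleR_component
      diagonal_sandwich_entry[OF kron_filt_entry] rho_chi_entry
    by (simp add: scaleR_conv_of_real)
  have "rho_filtered p x y z $ r $ s = ?G $ r $ s" for r s
    unfolding entry weights ghz_sparse_def vec_lambda_beta
    by (simp only: of_real_add if_distrib[of complex_of_real] of_real_0)
  then show ?thesis by (simp add: vec_eq_iff)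
qed

lemma mtrace_mult_ghz_sparse:
  "mtrace (K ** ghz_sparse w0 w1 w7 wc) =
     K$(0,0,0)$(0,0,0) * complex_of_real w0 + K$(0,0,1)$(0,0,1) * complex_of_real w1
   + K$(1,1,1)$(1,1,1) * complex_of_real w7 + (K$(0,0,0)$(1,1,1) + K$(1,1,1)$(0,0,0)) * complex_of_real wc"
proof -
  have pick: "(\<Sum>i\<in>UNIV. \<Sum>j\<in>UNIV. K$i$j * (if j = a \<and> i = b then v else 0)) = K$b$a * v" for a b v
  proof -
    have "(\<Sum>j\<in>UNIV. K$i$j * (if j = a \<and> i = b then v else 0)) = (if i = b then K$b$a * v else 0)" for i
      by (cases "i = b") (auto simp: if_distrib[of "\<lambda>u. _ * u"] cong: if_cong)
    then show ?thesis by simp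
  qed
  show ?thesis
    unfolding mtrace_def matrix_matrix_mult_def ghz_sparse_def
    by (simp only: vec_lambda_beta distrib_left sum.distrib pick) (simp add: algebra_simps)
qed

definition ghz_corr :: "real \<Rightarrow> real \<Rightarrow> real^3 \<Rightarrow> real^3 \<Rightarrow> real^3 \<Rightarrow> real" where
  "ghz_corr d \<alpha> a b c =
     d * a$3*b$3*c$3 + \<alpha> * (a$1*b$1*c$1 - a$1*b$2*c$2 - a$2*b$1*c$2 - a$2*b$2*c$1)"

lemma mtrace_observable_ghz_sparse:
  "mtrace (kron (dot_sigma a) (kron (dot_sigma b) (dot_sigma c)) ** ghz_sparse w0 w1 w7 wc)
     = complex_of_real (ghz_corr (w0 - w1 - w7) (2 * wc) a b c)"
  unfolding mtrace_mult_ghz_sparse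
  by (simp add: kron_def dot_sigma_entries complex_eq_iff) (simp add: ghz_corr_def algebra_simps)

lemma cos_sin_pi_div_8:
  "cos (pi/8)^2 = (2 + sqrt 2)/4" "sin (pi/8)^2 = (2 - sqrt 2)/4" "cos (pi/8) * sin (pi/8) = sqrt 2 / 4"
proof -
  have diff: "cos (pi/8)^2 - sin (pi/8)^2 = sqrt 2 / 2" using cos_double[of "pi/8"] cos_45 by simp
  have sum: "cos (pi/8)^2 + sin (pi/8)^2 = 1" by simp
  have "cos (pi/8)^2 = ((cos (pi/8)^2 - sin (pi/8)^2) + (cos (pi/8)^2 + sin (pi/8)^2)) / 2"
    by (simp add: field_simps)
  also have "\<dots> = (2 + sqrt 2)/4" by (simp only: diff sum) (simp add: field_simps)
  finally show "cos (pi/8)^2 = (2 + sqrt 2)/4" .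
  have "sin (pi/8)^2 = ((cos (pi/8)^2 + sin (pi/8)^2) - (cos (pi/8)^2 - sin (pi/8)^2)) / 2"
    by (simp add: field_simps)
  also have "\<dots> = (2 - sqrt 2)/4" by (simp only: diff sum) (simp add: field_simps)
  finally show "sin (pi/8)^2 = (2 - sqrt 2)/4" .
  show "cos (pi/8) * sin (pi/8) = sqrt 2 / 4"
    using sin_double[of "pi/8"] sin_45 by (simp add: mult.commute)
qed

lemma mtrace_observable_rho_filtered:
  "mtrace (kron (dot_sigma a) (kron (dot_sigma b) (dot_sigma c)) ** rho_filtered p x y z)
     = complex_of_real (ghz_corr (Dval p x y z / normN p x y z) (sqrt 2 / 2 * (p*x*y*z / normN p x y z)) a b c)"
proof -
  have "(p * cos (pi/8)^2 + (1-p)/2) * x^2*y^2*z^2 - (1-p)/2 * x^2*y^2 - p * sin (pi/8)^2 = Dval p x y z"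
    unfolding Dval_def cos_sin_pi_div_8 by (simp add: field_simps)
  then have d: "(p * cos (pi/8)^2 + (1-p)/2) * x^2*y^2*z^2 / normN p x y z - (1-p)/2 * x^2*y^2 / normN p x y z
      - p * sin (pi/8)^2 / normN p x y z = Dval p x y z / normN p x y z"
    by (simp only: diff_divide_distrib[symmetric])
  have "p * cos (pi/8) * sin (pi/8) * x*y*z = (cos (pi/8) * sin (pi/8)) * (p*x*y*z)"
    by (simp add: ac_simps)
  then have \<alpha>: "2 * (p * cos (pi/8) * sin (pi/8) * x*y*z / normN p x y z) = sqrt 2 / 2 * (p*x*y*z / normN p x y z)"
    by (simp only: cos_sin_pi_div_8(3)) simp
  show ?thesis
    by (simp only: rho_filtered_eq_ghz_sparse mtrace_observable_ghz_sparse d \<alpha>)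
qed

definition svetlichny_sum ::
  "(real^3 \<Rightarrow> real^3 \<Rightarrow> real^3 \<Rightarrow> 'a::ab_group_add) \<Rightarrow>
     real^3 \<Rightarrow> real^3 \<Rightarrow> real^3 \<Rightarrow> real^3 \<Rightarrow> real^3 \<Rightarrow> real^3 \<Rightarrow> 'a" where
  "svetlichny_sum E a a' b b' c c' = E a (b + b') c + E a (b - b') c' + E a' (b - b') c - E a' (b + b') c'"

lemma mtrace_svetlichny_op:
  "mtrace (svetlichny_op a a' b b' c c' ** \<rho>) =
     svetlichny_sum (\<lambda>a b c. mtrace (kron (dot_sigma a) (kron (dot_sigma b) (dot_sigma c)) ** \<rho>)) a a' b b' c c'"
proof -
  have "svetlichny_op a a' b b' c c' =
      kron (dot_sigma a) (kron (dot_sigma (b + b')) (dot_sigma c))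
    + kron (dot_sigma a) (kron (dot_sigma (b - b')) (dot_sigma c'))
    + kron (dot_sigma a') (kron (dot_sigma (b - b')) (dot_sigma c))
    - kron (dot_sigma a') (kron (dot_sigma (b + b')) (dot_sigma c'))"
    by (simp add: svetlichny_op_def Let_def dot_sigma_add dot_sigma_diff kron_add_right kron_diff_right
        algebra_simps)
  then show ?thesis
    by (simp add: mtrace_mult_add_left mtrace_mult_diff_left svetlichny_sum_def)
qed

lemma mtrace_svetlichny_rho_filtered:
  "mtrace (svetlichny_op a a' b b' c c' ** rho_filtered p x y z) = complex_of_real
     (svetlichny_sum (ghz_corr (Dval p x y z / normN p x y z) (sqrt 2 / 2 * (p*x*y*z / normN p x y z)))
        a a' b b' c c')"
  unfolding mtrace_svetlichny_op mtrace_observable_rho_filtered by (simp add: svetlichny_sum_def)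

lemma norm_vec3: "norm (a::real^3) = sqrt (a$1^2 + a$2^2 + a$3^2)"
  by (simp add: norm_eq_sqrt_inner inner_vec_def sum_3 power2_eq_square)

lemma abs_inner_le_of_unit:
  fixes a X :: "real^3"
  assumes "norm a = 1" "X$1^2 + X$2^2 + X$3^2 \<le> M^2" "0 \<le> M"
  shows "\<bar>a \<bullet> X\<bar> \<le> M"
proof -
  have "norm X \<le> sqrt (M^2)"
    unfolding norm_vec3 using assms(2) by (rule real_sqrt_le_mono)
  then show ?thesis
    using Cauchy_Schwarz_ineq2[of a X] assms(1,3) by simp
qed

lemma svetlichny_tensor_sum_sq:
  fixes b1 b2 b3 f1 f2 f3 c1 c2 c3 g1 g2 g3 :: real
  assumes "b1^2+b2^2+b3^2 = 1" "f1^2+f2^2+f3^2 = 1" "c1^2+c2^2+c3^2 = 1" "g1^2+g2^2+g3^2 = 1"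
  shows "((b1+f1)*c1 + (b1-f1)*g1)^2 + ((b1+f1)*c2 + (b1-f1)*g2)^2 + ((b1+f1)*c3 + (b1-f1)*g3)^2
       + ((b2+f2)*c1 + (b2-f2)*g1)^2 + ((b2+f2)*c2 + (b2-f2)*g2)^2 + ((b2+f2)*c3 + (b2-f2)*g3)^2
       + ((b3+f3)*c1 + (b3-f3)*g1)^2 + ((b3+f3)*c2 + (b3-f3)*g2)^2 + ((b3+f3)*c3 + (b3-f3)*g3)^2 = 4"
proof -
  have "((b1+f1)*c1 + (b1-f1)*g1)^2 + ((b1+f1)*c2 + (b1-f1)*g2)^2 + ((b1+f1)*c3 + (b1-f1)*g3)^2
       + ((b2+f2)*c1 + (b2-f2)*g1)^2 + ((b2+f2)*c2 + (b2-f2)*g2)^2 + ((b2+f2)*c3 + (b2-f2)*g3)^2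
       + ((b3+f3)*c1 + (b3-f3)*g1)^2 + ((b3+f3)*c2 + (b3-f3)*g2)^2 + ((b3+f3)*c3 + (b3-f3)*g3)^2
     = ((b1^2+b2^2+b3^2) + (f1^2+f2^2+f3^2))*((c1^2+c2^2+c3^2) + (g1^2+g2^2+g3^2))
       + 2*(b1*f1+b2*f2+b3*f3)*((c1^2+c2^2+c3^2) - (g1^2+g2^2+g3^2))
       + 2*((b1^2+b2^2+b3^2) - (f1^2+f2^2+f3^2))*(c1*g1+c2*g2+c3*g3)"
    by (simp add: power2_eq_square algebra_simps)
  also have "\<dots> = 4" using assms by simp
  finally show ?thesis .
qed

lemma ghz_contraction_sum_sq_le:
  fixes \<alpha> d L v11 v12 v13 v21 v22 v23 v31 v32 v33 :: real
  assumes "2*\<alpha>^2 \<le> L^2" "d^2 \<le> L^2"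
    and "v11^2+v12^2+v13^2+v21^2+v22^2+v23^2+v31^2+v32^2+v33^2 = 4"
  shows "(\<alpha>*(v11 - v22))^2 + (-(\<alpha>*(v12 + v21)))^2 + (d * v33)^2 \<le> (2*L)^2"
proof -
  have pair: "(\<alpha>*(u - v))^2 \<le> L^2 * (u^2 + v^2)" for u v
  proof -
    have "(\<alpha>*(u - v))^2 = \<alpha>^2 * (u - v)^2" by (simp add: power_mult_distrib)
    also have "\<dots> \<le> \<alpha>^2 * (2*(u^2 + v^2))"
    proof (rule mult_left_mono)
      have "2*(u^2 + v^2) - (u - v)^2 = (u + v)^2" by (simp add: power2_eq_square algebra_simps)
      then show "(u - v)^2 \<le> 2*(u^2 + v^2)" using zero_le_power2[of "u + v"] by linarith
    qed simp
    also have "\<dots> \<le> L^2 * (u^2 + v^2)"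
      using mult_right_mono[OF assms(1), of "u^2 + v^2"] by (simp add: algebra_simps)
    finally show ?thesis .
  qed
  have "(\<alpha>*(v11 - v22))^2 \<le> L^2 * (v11^2 + v22^2)" by (rule pair)
  moreover have "(-(\<alpha>*(v12 + v21)))^2 \<le> L^2 * (v12^2 + v21^2)" using pair[of v12 "-v21"] by simp
  moreover have "(d * v33)^2 \<le> L^2 * v33^2"
    using assms(2) by (simp add: power_mult_distrib mult_right_mono)
  moreover have "L^2 * (v11^2 + v22^2) + L^2 * (v12^2 + v21^2) + L^2 * v33^2 \<le> L^2 * 4"
    using assms(3) by (simp only: assms(3)[symmetric] distrib_left[symmetric]) (rule mult_left_mono; simp)
  ultimately show ?thesis by (simp add: power_mult_distrib)
qed

lemma svetlichny_sum_ghz_corr_le: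
  fixes a a' b b' c c' :: "real^3"
  assumes n: "norm a = 1" "norm a' = 1" "norm b = 1" "norm b' = 1" "norm c = 1" "norm c' = 1"
    and L: "2*\<alpha>^2 \<le> L^2" "d^2 \<le> L^2" "0 \<le> L"
  shows "\<bar>svetlichny_sum (ghz_corr d \<alpha>) a a' b b' c c'\<bar> \<le> 4*L"
proof -
  have u: "v$1^2 + v$2^2 + v$3^2 = 1" if "norm v = 1" for v :: "real^3"
    using that unfolding norm_vec3 by simp
  let ?v = "\<lambda>j k. (b$j+b'$j)*c$k + (b$j-b'$j)*c'$k"
  let ?w = "\<lambda>j k. (b$j+b'$j)*(-c'$k) + (b$j-b'$j)*c$k"
  define X where "X = (vector [\<alpha>*(?v 1 1 - ?v 2 2), -(\<alpha>*(?v 1 2 + ?v 2 1)), d*?v 3 3] :: real^3)"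
  define Y where "Y = (vector [\<alpha>*(?w 1 1 - ?w 2 2), -(\<alpha>*(?w 1 2 + ?w 2 1)), d*?w 3 3] :: real^3)"
  have "(?v 1 1)^2 + (?v 1 2)^2 + (?v 1 3)^2 + (?v 2 1)^2 + (?v 2 2)^2 + (?v 2 3)^2
      + (?v 3 1)^2 + (?v 3 2)^2 + (?v 3 3)^2 = 4"
    using svetlichny_tensor_sum_sq[OF u[OF n(3)] u[OF n(4)] u[OF n(5)] u[OF n(6)]] by simp
  then have X: "X$1^2 + X$2^2 + X$3^2 \<le> (2*L)^2"
    unfolding X_def vector_3 by (rule ghz_contraction_sum_sq_le[OF L(1,2)])
  have c': "(- c'$1)^2 + (- c'$2)^2 + (- c'$3)^2 = 1" using u[OF n(6)] by simp
  have "(?w 1 1)^2 + (?w 1 2)^2 + (?w 1 3)^2 + (?w 2 1)^2 + (?w 2 2)^2 + (?w 2 3)^2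
      + (?w 3 1)^2 + (?w 3 2)^2 + (?w 3 3)^2 = 4"
    using svetlichny_tensor_sum_sq[OF u[OF n(3)] u[OF n(4)] c' u[OF n(5)]] by simp
  then have Y: "Y$1^2 + Y$2^2 + Y$3^2 \<le> (2*L)^2"
    unfolding Y_def vector_3 by (rule ghz_contraction_sum_sq_le[OF L(1,2)])
  have "svetlichny_sum (ghz_corr d \<alpha>) a a' b b' c c' = a \<bullet> X + a' \<bullet> Y"
    by (simp add: svetlichny_sum_def ghz_corr_def X_def Y_def inner_vec_def sum_3 algebra_simps)
  moreover have "\<bar>a \<bullet> X\<bar> \<le> 2*L" "\<bar>a' \<bullet> Y\<bar> \<le> 2*L"
    using abs_inner_le_of_unit[OF n(1) X] abs_inner_le_of_unit[OF n(2) Y] L(3) by simp_all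
  ultimately show ?thesis by linarith
qed

lemma two_mul_sqrt_2_half_sq: "2 * (sqrt 2 / 2 * t)^2 = (t::real)^2"
  by (simp add: power_mult_distrib power_divide)

lemma four_mul_sqrt_2_half: "4 * sqrt 2 * (sqrt 2 / 2 * t) = 4 * (t::real)"
  by (simp add: field_simps)

lemma svetlichny_sum_ghz_corr_witness:
  fixes h :: real
  defines "h \<equiv> sqrt 2 / 2"
  shows "svetlichny_sum (ghz_corr d \<alpha>) (vector [1,0,0]) (vector [0,-1,0])
           (vector [h,h,0]) (vector [h,-h,0]) (vector [1,0,0]) (vector [0,-1,0]) = 4 * sqrt 2 * \<alpha>"
    and "norm (vector [1,0,0] :: real^3) = 1" "norm (vector [0,-1,0] :: real^3) = 1"
    and "norm (vector [h,h,0] :: real^3) = 1" "norm (vector [h,-h,0] :: real^3) = 1"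
proof -
  show "svetlichny_sum (ghz_corr d \<alpha>) (vector [1,0,0]) (vector [0,-1,0])
      (vector [h,h,0]) (vector [h,-h,0]) (vector [1,0,0]) (vector [0,-1,0]) = 4 * sqrt 2 * \<alpha>"
    by (simp add: svetlichny_sum_def ghz_corr_def h_def algebra_simps)
  have "h^2 + h^2 = 1" unfolding h_def by (simp add: power_divide)
  then show "norm (vector [1,0,0] :: real^3) = 1" "norm (vector [0,-1,0] :: real^3) = 1"
    "norm (vector [h,h,0] :: real^3) = 1" "norm (vector [h,-h,0] :: real^3) = 1"
    by (simp_all add: norm_vec3)
qed

lemma svet_values_rho_filtered_witness:
  assumes "0 \<le> p*x*y*z / normN p x y z"
  shows "4 * (p*x*y*z / normN p x y z) \<in> svet_values (rho_filtered p x y z)"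
proof -
  define h :: real where "h = sqrt 2 / 2"
  note witness = svetlichny_sum_ghz_corr_witness[folded h_def]
  have "0 \<le> 4 * (p*x*y*z / normN p x y z)" using assms by simp
  then have attained: "cmod (mtrace (svetlichny_op (vector [1,0,0]) (vector [0,-1,0]) (vector [h,h,0]) (vector [h,-h,0])
      (vector [1,0,0]) (vector [0,-1,0]) ** rho_filtered p x y z)) = 4 * (p*x*y*z / normN p x y z)"
    unfolding mtrace_svetlichny_rho_filtered witness(1) norm_of_real four_mul_sqrt_2_half
    by (rule abs_of_nonneg)
  show ?thesis
    unfolding svet_values_def
    by (intro CollectI exI conjI, rule sym[OF attained], (fact witness)+)
qed

lemma svet_values_rho_filtered_le:
  assumes "0 < normN p x y z" "\<bar>Dval p x y z\<bar> \<le> p*x*y*z"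
    and "v \<in> svet_values (rho_filtered p x y z)"
  shows "v \<le> 4 * (p*x*y*z / normN p x y z)"
proof -
  obtain a a' b b' c c' where v: "v = cmod (mtrace (svetlichny_op a a' b b' c c' ** rho_filtered p x y z))"
    and n: "norm a = 1" "norm a' = 1" "norm b = 1" "norm b' = 1" "norm c = 1" "norm c' = 1"
    using assms(3) unfolding svet_values_def by blast
  have "\<bar>Dval p x y z / normN p x y z\<bar> \<le> \<bar>p*x*y*z / normN p x y z\<bar>"
    using assms(1,2) by (simp add: divide_right_mono)
  then have "(Dval p x y z / normN p x y z)^2 \<le> (p*x*y*z / normN p x y z)^2"
    by (simp only: abs_le_square_iff)
  moreover have "0 \<le> p*x*y*z / normN p x y z"
    using assms(1,2) by simp
  ultimately show ?thesis
    unfolding v mtrace_svetlichny_rho_filtered norm_of_real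
    by (intro svetlichny_sum_ghz_corr_le[OF n] two_mul_sqrt_2_half_sq[THEN eq_refl])
qed

lemma violates_svetlichny_rho_filtered:
  assumes "normN p x y z < p*x*y*z" "0 < normN p x y z"
  shows "violates_svetlichny (rho_filtered p x y z)"
proof -
  have "1 < p*x*y*z / normN p x y z"
    using assms by simp
  then have "4 < 4 * (p*x*y*z / normN p x y z)" "0 \<le> p*x*y*z / normN p x y z"
    by simp_all
  then show ?thesis
    unfolding violates_svetlichny_def using svet_values_rho_filtered_witness by blast
qed

lemma corr_matrix_rho_filtered_entry:
  "corr_matrix (rho_filtered p x y z) $ j $ (i, k) =
     ghz_corr (Dval p x y z / normN p x y z) (sqrt 2 / 2 * (p*x*y*z / normN p x y z))
       (axis i 1) (axis j 1) (axis k 1)"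
  unfolding corr_matrix_def sigma_eq_dot_sigma_axis
  by (simp add: mtrace_mult_commute[of "rho_filtered p x y z"] mtrace_observable_rho_filtered)

lemma ghz_corr_matrix_gram:
  fixes M :: "real^(3 \<times> 3)^3"
  assumes M: "\<And>i j k. M $ j $ (i, k) = ghz_corr d \<alpha> (axis i 1) (axis j 1) (axis k 1)"
  shows "M ** transpose M = (\<chi> j j'. if j = j' then (if j = 3 then d^2 else 2*\<alpha>^2) else 0)"
proof -
  have entry: "(M ** transpose M) $ j $ j' = (\<Sum>i\<in>UNIV. \<Sum>k\<in>UNIV. M$j$(i,k) * M$j'$(i,k))" for j j'
    unfolding matrix_matrix_mult_def transpose_def vec_lambda_beta
    by (simp add: sum.cartesian_product UNIV_Times_UNIV)
  have axis:
    "axis (1::3) (1::real) $ 1 = 1" "axis (1::3) (1::real) $ 2 = 0" "axis (1::3) (1::real) $ 3 = 0"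
    "axis (2::3) (1::real) $ 1 = 0" "axis (2::3) (1::real) $ 2 = 1" "axis (2::3) (1::real) $ 3 = 0"
    "axis (3::3) (1::real) $ 1 = 0" "axis (3::3) (1::real) $ 2 = 0" "axis (3::3) (1::real) $ 3 = 1"
    by (simp_all add: axis_def)
  show ?thesis
    unfolding vec_eq_iff forall_3 entry sum_3 M
    by (simp add: ghz_corr_def axis power2_eq_square)
qed

lemma has_singular_values_of_diagonal_gram:
  fixes M :: "real^'n^3"
  assumes "M ** transpose M = (\<chi> j j'. if j = j' then (if j = 3 then t^2 else s^2) else 0)"
    and "0 \<le> s" "0 \<le> t"
  shows "has_singular_values M {#s, s, t#}"
  unfolding has_singular_values_def assms(1) det_3 using assms(2,3) by (auto simp: mat_def)

lemma has_singular_values_corr_matrix_rho_filtered: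
  assumes "0 < normN p x y z" "0 \<le> p*x*y*z"
  shows "has_singular_values (corr_matrix (rho_filtered p x y z))
    {# p*x*y*z / normN p x y z, p*x*y*z / normN p x y z, \<bar>Dval p x y z\<bar> / normN p x y z #}"
proof (rule has_singular_values_of_diagonal_gram)
  show "corr_matrix (rho_filtered p x y z) ** transpose (corr_matrix (rho_filtered p x y z)) =
    (\<chi> j j'. if j = j' then (if j = 3 then (\<bar>Dval p x y z\<bar> / normN p x y z)^2
                                    else (p*x*y*z / normN p x y z)^2) else 0)"
    by (simp only: ghz_corr_matrix_gram[OF corr_matrix_rho_filtered_entry] two_mul_sqrt_2_half_sq
        power_divide power2_abs)
  show "0 \<le> p*x*y*z / normN p x y z" "0 \<le> \<bar>Dval p x y z\<bar> / normN p x y z"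
    using assms by simp_all
qed

lemma sqrt_2_bounds: "1.414 < sqrt 2" "sqrt 2 < 2"
   by (rule real_less_rsqrt real_less_lsqrt; simp add: power2_eq_square)+

lemma normN_pos:
  assumes "0 \<le> p" "p \<le> 1" "0 < x" "0 < y" "0 < z"
  shows "0 < normN p x y z"
proof -
  have "0 \<le> (2 - sqrt 2)/4 * p" using sqrt_2_bounds assms by simp
  moreover have "0 \<le> (1 - p)/2 * x^2 * y^2" using assms by simp
  moreover have "0 < (2 + sqrt 2 * p)/4 * x^2 * y^2 * z^2" using assms by (simp add: add_pos_nonneg)
  ultimately show ?thesis unfolding normN_def by linarith
qed

text \<open>Minimising the quadratic A p + K u^2 against p u z at u = p z/(2K), with K = B + C z^2,
  leaves the margin p (p z^2 - 4 A K)/(4 K), and p z^2 - 4 A K = (p - 4 A C) z^2 - 4 A B is made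
  equal to 1 by the choice of z.\<close>
lemma exists_quadratic_filter_below_linear:
  fixes A B C p :: real
  assumes "0 \<le> A" "0 \<le> B" "0 < C" "0 < p" "4*A*C < p"
  shows "\<exists>u z. 0 < u \<and> 0 < z \<and> A*p + (B + C*z^2)*u^2 < p*u*z"
proof -
  define z where "z = sqrt ((4*A*B + 1) / (p - 4*A*C))"
  have "0 < (4*A*B + 1) / (p - 4*A*C)"
    using assms by (simp add: add_nonneg_pos)
  then have z: "0 < z" "z^2 = (4*A*B + 1) / (p - 4*A*C)"
    by (simp_all add: z_def)
  define K where "K = B + C*z^2"
  have K: "0 < K" using assms z by (simp add: K_def add_nonneg_pos)
  have key: "p*z^2 - 4*A*K = 1"
    using z(2) assms(5) by (simp add: K_def field_simps)
  define u where "u = p*z / (2*K)"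
  have "p*u*z - (A*p + K*u^2) = p * (p*z^2 - 4*A*K) / (4*K)"
    using K by (simp add: u_def field_simps power2_eq_square)
  also have "\<dots> > 0" using key assms(4) K by simp
  finally show ?thesis
    using assms(4) z(1) K by (intro exI[of _ u] exI[of _ z]) (simp add: u_def K_def)
qed

lemma pi_div_8_filter_condition:
  assumes "0.3697 \<le> p" "p \<le> 1"
  shows "4 * ((2 - sqrt 2)/4) * ((2 + sqrt 2 * p)/4) < p"
proof -
  define t where "t = sqrt 2 * (1 - p)"
  have "4 * ((2 - sqrt 2)/4) * ((2 + sqrt 2 * p)/4) = 1 - p/2 - t/2"
    unfolding t_def by (simp add: field_simps)
  moreover have "1.414 * (1 - p) \<le> t"
    unfolding t_def using sqrt_2_bounds(1) assms(2) by (intro mult_right_mono) simp_all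
  ultimately show ?thesis using assms(1) by simp
qed

lemma exists_filter_normN_less:
  assumes "0.3697 \<le> p" "p \<le> 1"
  shows "\<exists>x z. 0 < x \<and> 0 < z \<and> normN p x 1 z < p*x*1*z"
proof -
  have "\<exists>u z. 0 < u \<and> 0 < z \<and>
      (2 - sqrt 2)/4 * p + ((1-p)/2 + (2 + sqrt 2 * p)/4 * z^2) * u^2 < p*u*z"
    using assms sqrt_2_bounds pi_div_8_filter_condition[OF assms]
    by (intro exists_quadratic_filter_below_linear) (simp_all add: add_pos_nonneg)
  then show ?thesis
    by (simp add: normN_def algebra_simps)
qed

theorem mainTheorem3:
  shows "(\<forall>p x y z :: real. 0 \<le> p \<and> p \<le> 1 \<and> x > 0 \<and> y > 0 \<and> z > 0 \<longrightarrow>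
            has_singular_values (corr_matrix (rho_filtered p x y z))
              {# p*x*y*z / normN p x y z, p*x*y*z / normN p x y z, \<bar>Dval p x y z\<bar> / normN p x y z #}
          \<and> (p*x*y*z > \<bar>Dval p x y z\<bar> \<longrightarrow>
               4*p*x*y*z / normN p x y z \<in> svet_values (rho_filtered p x y z)
             \<and> (\<forall>v\<in>svet_values (rho_filtered p x y z). v \<le> 4*p*x*y*z / normN p x y z)))
       \<and> (\<forall>p :: real. 0.3697 \<le> p \<and> p \<le> 1 \<longrightarrow>
            (\<exists>x y z :: real. x > 0 \<and> y > 0 \<and> z > 0 \<and> violates_svetlichny (rho_filtered p x y z)))"
proof (intro conjI allI impI ballI)
  fix p x y z :: real
  assume "0 \<le> p \<and> p \<le> 1 \<and> x > 0 \<and> y > 0 \<and> z > 0"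
  then have N: "0 < normN p x y z" and pxyz: "0 \<le> p*x*y*z"
    using normN_pos[of p x y z] by auto
  have four: "4*p*x*y*z / normN p x y z = 4 * (p*x*y*z / normN p x y z)"
    by simp
  show "has_singular_values (corr_matrix (rho_filtered p x y z))
      {# p*x*y*z / normN p x y z, p*x*y*z / normN p x y z, \<bar>Dval p x y z\<bar> / normN p x y z #}"
    by (rule has_singular_values_corr_matrix_rho_filtered[OF N pxyz])
  show "4*p*x*y*z / normN p x y z \<in> svet_values (rho_filtered p x y z)"
    unfolding four by (rule svet_values_rho_filtered_witness[OF divide_nonneg_pos[OF pxyz N]])
  fix v assume "\<bar>Dval p x y z\<bar> < p*x*y*z" and v: "v \<in> svet_values (rho_filtered p x y z)"
  then have "\<bar>Dval p x y z\<bar> \<le> p*x*y*z" by simp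
  then show "v \<le> 4*p*x*y*z / normN p x y z"
    unfolding four by (rule svet_values_rho_filtered_le[OF N _ v])
next
  fix p :: real
  assume p: "0.3697 \<le> p \<and> p \<le> 1"
  then obtain x z where xz: "0 < x" "0 < z" and less: "normN p x 1 z < p*x*1*z"
    using exists_filter_normN_less by blast
  have "0 < normN p x 1 z"
    using p xz normN_pos[of p x 1 z] by simp
  with less have "violates_svetlichny (rho_filtered p x 1 z)"
    by (rule violates_svetlichny_rho_filtered)
  with xz show "\<exists>x y z :: real. x > 0 \<and> y > 0 \<and> z > 0 \<and> violates_svetlichny (rho_filtered p x y z)"
    by (intro exI[of _ x] exI[of _ 1] exI[of _ z]) simp
qed

end
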